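(* Two elements of $SB_n$ are conjugate if and only if their summit sets are identical.
   Context: Fix $n\ge 2$. $SB_n$ is the monoid with generators $\sigma_i,\sigma_i^{-1},x_i$ ($i=1,\dots,n-1$) and relations: $\sigma_i\sigma_j=\sigma_j\sigma_i$ and $x_ix_j=x_jx_i$ if $|i-j|>1$; $x_i\sigma_j=\sigma_jx_i$ if $|i-j|\ne1$; $\sigma_i\sigma_{i+1}\sigma_i=\sigma_{i+1}\sigma_i\sigma_{i+1}$; $\sigma_i\sigma_{i+1}x_i=x_{i+1}\sigma_i\sigma_{i+1}$; $\sigma_{i+1}\sigma_ix_{i+1}=x_i\sigma_{i+1}\sigma_i$; $\sigma_i\sigma_i^{-1}=\sigma_i^{-1}\sigma_i=1$. Two elements $u,v\in SB_n$ are conjugate if $v=g^{-1}ug$ for some invertible $g\in SB_n$ (equivalently $g$ in the image of the braid group, generated by $\sigma_i^{\pm1}$). $SB_n^+$ is the monoid with generators $\sigma_i,x_i$ and all relations except the last; $\doteq$ denotes equality in $SB_n^+$. $\Delta=\sigma_1\cdots\sigma_{n-1}\,\sigma_1\cdots\sigma_{n-2}\cdots\sigma_1\sigma_2\,\sigma_1$. Every element $W$ of $SB_n$ has a unique Garside (left) normal form $W=\Delta^m\overline{A}$, where $m\in\mathbb Z$ (the power of $W$) and $\overline{A}$ is a positive word (in $\sigma_i,x_i$) that is not positively equal to $\Delta Z$ for any positive $Z$ and is the lexicographically smallest positive word positively equal to itself, for the order $\sigma_1<\cdots<\sigma_{n-1}<x_1<\cdots<x_{n-1}$. The summit power of $W$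 is the maximum of the powers of all elements conjugate to $W$ (this maximum exists), and the summit set of $W$ is the set of Garside normal forms $\Delta^m\overline{A}$ of the elements conjugate to $W$ whose power $m$ equals the summit power. *)

theory Defs
  imports Main
begin

text \<open>Generators of SB_n: S i = sigma_i, Si i = sigma_i^{-1}, X i = x_i (1 <= i <= n-1).
Elements of SB_n are represented by words (lists of generators); equality in SB_n is
the congruence generated by the defining relations.\<close>

datatype gen = S nat | Si nat | X nat

fun gidx :: "gen \<Rightarrow> nat" where
  "gidx (S i) = i" | "gidx (Si i) = i" | "gidx (X i) = i"

definition valid_word :: "nat \<Rightarrow> gen list \<Rightarrow> bool" where
  "valid_word n w \<longleftrightarrow> (\<forall>g\<in>set w. 1 \<le> gidx g \<and> gidx g \<le> n - 1)"

fun is_pos_gen :: "gen \<Rightarrow> bool" where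
  "is_pos_gen (Si _) = False" | "is_pos_gen _ = True"

fun is_braid_gen :: "gen \<Rightarrow> bool" where
  "is_braid_gen (X _) = False" | "is_braid_gen _ = True"

definition pos_word :: "nat \<Rightarrow> gen list \<Rightarrow> bool" where
  "pos_word n w \<longleftrightarrow> valid_word n w \<and> (\<forall>g\<in>set w. is_pos_gen g)"

definition braid_word :: "nat \<Rightarrow> gen list \<Rightarrow> bool" where
  "braid_word n w \<longleftrightarrow> valid_word n w \<and> (\<forall>g\<in>set w. is_braid_gen g)"

definition pos_rels :: "nat \<Rightarrow> (gen list \<times> gen list) set" where
  "pos_rels n =
     {([S i, S j], [S j, S i]) | i j. 1 \<le> i \<and> i \<le> n - 1 \<and> 1 \<le> j \<and> j \<le> n - 1 \<and> (i + 1 < j \<or> j + 1 < i)}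
   \<union> {([X i, X j], [X j, X i]) | i j. 1 \<le> i \<and> i \<le> n - 1 \<and> 1 \<le> j \<and> j \<le> n - 1 \<and> (i + 1 < j \<or> j + 1 < i)}
   \<union> {([X i, S j], [S j, X i]) | i j. 1 \<le> i \<and> i \<le> n - 1 \<and> 1 \<le> j \<and> j \<le> n - 1 \<and> i \<noteq> j + 1 \<and> j \<noteq> i + 1}
   \<union> {([S i, S (i+1), S i], [S (i+1), S i, S (i+1)]) | i. 1 \<le> i \<and> i + 1 \<le> n - 1}
   \<union> {([S i, S (i+1), X i], [X (i+1), S i, S (i+1)]) | i. 1 \<le> i \<and> i + 1 \<le> n - 1}
   \<union> {([S (i+1), S i, X (i+1)], [X i, S (i+1), S i]) | i. 1 \<le> i \<and> i + 1 \<le> n - 1}"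

definition sb_rels :: "nat \<Rightarrow> (gen list \<times> gen list) set" where
  "sb_rels n = pos_rels n \<union> {([S i, Si i], []) | i. 1 \<le> i \<and> i \<le> n - 1}
                          \<union> {([Si i, S i], []) | i. 1 \<le> i \<and> i \<le> n - 1}"

definition rew_step :: "(gen list \<times> gen list) set \<Rightarrow> (gen list \<times> gen list) set" where
  "rew_step R = {(u @ l @ v, u @ r @ v) | u l r v. (l, r) \<in> R \<or> (r, l) \<in> R}"

definition peq :: "nat \<Rightarrow> gen list \<Rightarrow> gen list \<Rightarrow> bool" where
  "peq n u v \<longleftrightarrow> (u, v) \<in> (rew_step (pos_rels n))\<^sup>*"

definition sbeq :: "nat \<Rightarrow> gen list \<Rightarrow> gen list \<Rightarrow> bool" where
  "sbeq n u v \<longleftrightarrow> (u, v) \<in> (rew_step (sb_rels n))\<^sup>*"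

fun ginv :: "gen \<Rightarrow> gen" where
  "ginv (S i) = Si i" | "ginv (Si i) = S i" | "ginv (X i) = X i"

text \<open>Inverse of a braid word (only meaningful for braid words).\<close>
definition inv_word :: "gen list \<Rightarrow> gen list" where
  "inv_word w = rev (map ginv w)"

definition delta :: "nat \<Rightarrow> gen list" where
  "delta n = concat [map S [1..<k+1]. k \<leftarrow> rev [1..<n]]"

definition delta_pow :: "nat \<Rightarrow> int \<Rightarrow> gen list" where
  "delta_pow n m = (if 0 \<le> m then concat (replicate (nat m) (delta n))
                    else concat (replicate (nat (- m)) (inv_word (delta n))))"

text \<open>Order sigma_1 < ... < sigma_{n-1} < x_1 < ... < x_{n-1}, extended lexicographically.\<close>
fun gkey :: "nat \<Rightarrow> gen \<Rightarrow> nat" where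
  "gkey n (S i) = i" | "gkey n (X i) = n + i" | "gkey n (Si i) = 2 * n + i"

definition lex_le :: "nat \<Rightarrow> gen list \<Rightarrow> gen list \<Rightarrow> bool" where
  "lex_le n a b \<longleftrightarrow> a = b \<or> (map (gkey n) a, map (gkey n) b) \<in> lexord {(p, q). p < q}"

text \<open>Conjugacy in SB_n by an invertible element (a braid word g).\<close>
definition sb_conj :: "nat \<Rightarrow> gen list \<Rightarrow> gen list \<Rightarrow> bool" where
  "sb_conj n u v \<longleftrightarrow> (\<exists>g. braid_word n g \<and> sbeq n v (inv_word g @ u @ g))"

definition is_garside_nf :: "nat \<Rightarrow> gen list \<Rightarrow> int \<Rightarrow> gen list \<Rightarrow> bool" where
  "is_garside_nf n W m A \<longleftrightarrow>
     pos_word n A \<and> sbeq n W (delta_pow n m @ A) \<and>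
     \<not> (\<exists>Z. pos_word n Z \<and> peq n A (delta n @ Z)) \<and>
     (\<forall>B. pos_word n B \<and> peq n B A \<longrightarrow> lex_le n A B)"

text \<open>Summit power: the maximum power among conjugates (exists by the paper).\<close>
definition summit_power :: "nat \<Rightarrow> gen list \<Rightarrow> int" where
  "summit_power n W = (GREATEST m. \<exists>W' A. valid_word n W' \<and> sb_conj n W W' \<and> is_garside_nf n W' m A)"

definition summit_set :: "nat \<Rightarrow> gen list \<Rightarrow> (int \<times> gen list) set" where
  "summit_set n W = {(m, A). \<exists>W'. valid_word n W' \<and> sb_conj n W W' \<and> is_garside_nf n W' m A
                                 \<and> m = summit_power n W}"

end

(* Conjugacy in SB_n is an equivalence relation, and the summit power and summit set of W
   depend only on the conjugacy class of W; so conjugate elements have the same summit set.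
   Conversely, a common member Delta^m A of two summit sets is the normal form of a conjugate
   of each element, and these two conjugates are both equal to Delta^m A, hence the elements
   are conjugate. It remains to show that summit sets are nonempty.

   Since Delta = sigma_i M with M positive, sigma_i^-1 = M Delta^-1; and conjugation by Delta
   maps sigma_j, x_j to sigma_(n-j), x_(n-j), so Delta^-1 moves to the left across positive
   words. Hence every element equals Delta^m A with A positive. The exponent sum in the
   sigma_i, invariant under the relations and under conjugation, bounds m on a conjugacy
   class, so maximal powers exist; for a maximal m the factor A is not divisible by Delta.
   Positively equal words have equal length, so A has a lexicographically least positive
   representative. *)

theory Submission
  imports Defs
begin

lemma rew_step_sym: "(a, b) \<in> rew_step R \<Longrightarrow> (b, a) \<in> rew_step R"
  unfolding rew_step_def by blast

lemma rew_step_append: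
  assumes "(a, b) \<in> rew_step R"
  shows "(u @ a @ v, u @ b @ v) \<in> rew_step R"
proof -
  obtain u' l r v' where "a = u' @ l @ v'" "b = u' @ r @ v'" "(l, r) \<in> R \<or> (r, l) \<in> R"
    using assms unfolding rew_step_def by blast
  then have "(u @ a @ v, u @ b @ v) = ((u @ u') @ l @ (v' @ v), (u @ u') @ r @ (v' @ v))"
    by simp
  with \<open>(l, r) \<in> R \<or> (r, l) \<in> R\<close> show ?thesis
    unfolding rew_step_def by blast
qed

lemma rew_step_mono: "R \<subseteq> R' \<Longrightarrow> rew_step R \<subseteq> rew_step R'"
  unfolding rew_step_def by blast

lemma rew_step_rel: "(l, r) \<in> R \<Longrightarrow> (l, r) \<in> rew_step R"
proof -
  assume "(l, r) \<in> R"
  then have "([] @ l @ [], [] @ r @ []) \<in> rew_step R"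
    unfolding rew_step_def by blast
  then show ?thesis by simp
qed

lemma rtrancl_rew_step_sym: "(a, b) \<in> (rew_step R)\<^sup>* \<Longrightarrow> (b, a) \<in> (rew_step R)\<^sup>*"
  by (induction rule: rtrancl_induct) (auto intro: rew_step_sym converse_rtrancl_into_rtrancl)

lemma rtrancl_rew_step_append:
  "(a, b) \<in> (rew_step R)\<^sup>* \<Longrightarrow> (u @ a @ v, u @ b @ v) \<in> (rew_step R)\<^sup>*"
  by (induction rule: rtrancl_induct) (auto intro: rew_step_append rtrancl_into_rtrancl)

lemma rtrancl_rew_step_invariant:
  fixes f :: "gen list \<Rightarrow> 'a::plus"
  assumes "\<And>l r. (l, r) \<in> R \<Longrightarrow> f l = f r"
    and "\<And>a b. f (a @ b) = f a + f b"
    and "(a, b) \<in> (rew_step R)\<^sup>*"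
  shows "f a = f b"
  using assms(3)
proof (induction rule: rtrancl_induct)
  case (step y z)
  then obtain u l r v where "y = u @ l @ v" "z = u @ r @ v" "(l, r) \<in> R \<or> (r, l) \<in> R"
    unfolding rew_step_def by blast
  with step.IH show ?case by (metis assms(1,2))
qed simp

lemma peq_refl: "peq n a a"
  unfolding peq_def by simp

lemma peq_sym: "peq n a b \<Longrightarrow> peq n b a"
  unfolding peq_def by (rule rtrancl_rew_step_sym)

lemma peq_trans [trans]: "peq n a b \<Longrightarrow> peq n b c \<Longrightarrow> peq n a c"
  unfolding peq_def by simp

lemma peq_append: "peq n a b \<Longrightarrow> peq n (u @ a @ v) (u @ b @ v)"
  unfolding peq_def by (rule rtrancl_rew_step_append)

lemma peq_rel: "(l, r) \<in> pos_rels n \<Longrightarrow> peq n l r"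
  unfolding peq_def by (intro r_into_rtrancl rew_step_rel)

lemma sbeq_refl: "sbeq n a a"
  unfolding sbeq_def by simp

lemma sbeq_sym: "sbeq n a b \<Longrightarrow> sbeq n b a"
  unfolding sbeq_def by (rule rtrancl_rew_step_sym)

lemma sbeq_trans [trans]: "sbeq n a b \<Longrightarrow> sbeq n b c \<Longrightarrow> sbeq n a c"
  unfolding sbeq_def by simp

lemma sbeq_append: "sbeq n a b \<Longrightarrow> sbeq n (u @ a @ v) (u @ b @ v)"
  unfolding sbeq_def by (rule rtrancl_rew_step_append)

lemma sbeq_rel: "(l, r) \<in> sb_rels n \<Longrightarrow> sbeq n l r"
  unfolding sbeq_def by (intro r_into_rtrancl rew_step_rel)

lemma peq_imp_sbeq: "peq n a b \<Longrightarrow> sbeq n a b"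
proof -
  have "rew_step (pos_rels n) \<subseteq> rew_step (sb_rels n)"
    by (rule rew_step_mono) (auto simp: sb_rels_def)
  then show "peq n a b \<Longrightarrow> sbeq n a b"
    unfolding peq_def sbeq_def using rtrancl_mono by blast
qed

definition sigma_run :: "nat \<Rightarrow> gen list" where
  "sigma_run k = map S [1..<Suc k]"

definition delta_upto :: "nat \<Rightarrow> gen list" where
  "delta_upto k = concat (map sigma_run (rev [1..<Suc k]))"

lemma sigma_run_0 [simp]: "sigma_run 0 = []"
  by (simp add: sigma_run_def)

lemma sigma_run_Suc: "sigma_run (Suc k) = sigma_run k @ [S (Suc k)]"
  by (simp add: sigma_run_def)

lemma set_sigma_run: "set (sigma_run k) = S ` {1..k}"
  by (auto simp: sigma_run_def)

lemma delta_upto_0 [simp]: "delta_upto 0 = []"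
  by (simp add: delta_upto_def)

lemma delta_upto_Suc: "delta_upto (Suc k) = sigma_run (Suc k) @ delta_upto k"
  by (simp add: delta_upto_def)

lemma set_delta_upto: "set (delta_upto k) = S ` {1..k}"
  by (induction k) (auto simp: delta_upto_Suc set_sigma_run)

lemma delta_eq_delta_upto: "1 \<le> n \<Longrightarrow> delta n = delta_upto (n - 1)"
  by (simp add: delta_def delta_upto_def sigma_run_def [abs_def] del: upt_Suc)

lemma pos_word_Cons:
  "pos_word n (a # w) \<longleftrightarrow> 1 \<le> gidx a \<and> gidx a \<le> n - 1 \<and> is_pos_gen a \<and> pos_word n w"
  by (auto simp: pos_word_def valid_word_def)

lemma pos_word_append: "pos_word n (a @ b) \<longleftrightarrow> pos_word n a \<and> pos_word n b"
  by (auto simp: pos_word_def valid_word_def)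

lemma pos_word_Nil [simp]: "pos_word n []"
  by (simp add: pos_word_def valid_word_def)

lemma pos_word_sigma_run: "k \<le> n - 1 \<Longrightarrow> pos_word n (sigma_run k)"
  by (auto simp: pos_word_def valid_word_def set_sigma_run)

text \<open>Each relation of \<open>SB_n\<^sup>+\<close> involving some \<open>x\<^sub>i\<close> is a braid relation with one
  \<open>\<sigma>\<^sub>i\<close> replaced by \<open>x\<^sub>i\<close>; stating the relations for \<open>T \<in> {S, X}\<close> lets the
  computations with \<open>\<Delta>\<close> below treat both kinds of generators at once.\<close>

lemma peq_far_commute:
  assumes "T \<in> {S, X}" "1 \<le> i" "i \<le> n - 1" "1 \<le> j" "j \<le> n - 1" "i + 1 < j \<or> j + 1 < i"
  shows "peq n [T i, S j] [S j, T i]"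
  using assms by (auto intro!: peq_rel simp: pos_rels_def)

lemma peq_same_index_commute:
  assumes "T \<in> {S, X}" "1 \<le> i" "i \<le> n - 1"
  shows "peq n [S i, T i] [T i, S i]"
  using assms by (auto intro: peq_sym[OF peq_rel] peq_refl simp: pos_rels_def)

lemma peq_braid_up:
  assumes "T \<in> {S, X}" "1 \<le> i" "i + 1 \<le> n - 1"
  shows "peq n [S i, S (Suc i), T i] [T (Suc i), S i, S (Suc i)]"
  using assms by (auto intro!: peq_rel simp: pos_rels_def)

lemma peq_braid_down:
  assumes "T \<in> {S, X}" "1 \<le> i" "i + 1 \<le> n - 1"
  shows "peq n [S (Suc i), S i, T (Suc i)] [T i, S (Suc i), S i]"
  using assms by (auto intro: peq_rel peq_sym[OF peq_rel] simp: pos_rels_def)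

lemma peq_commute_through:
  "(\<forall>b\<in>set Q. peq n [a, b] [b, a]) \<Longrightarrow> peq n (a # Q) (Q @ [a])"
proof (induction Q)
  case Nil
  then show ?case by (simp add: peq_refl)
next
  case (Cons b Q)
  have "peq n (a # b # Q) (b # a # Q)"
    using Cons.prems peq_append[of n "[a, b]" "[b, a]" "[]" Q] by simp
  also have "peq n (b # a # Q) (b # Q @ [a])"
    using Cons peq_append[of n "a # Q" "Q @ [a]" "[b]" "[]"] by simp
  finally show ?case by simp
qed

lemma pos_word_delta_upto: "k \<le> n - 1 \<Longrightarrow> pos_word n (delta_upto k)"
  by (auto simp: pos_word_def valid_word_def set_delta_upto)

lemma sigma_run_split:
  assumes "1 \<le> j" "j < k"
  shows "sigma_run k = map S [1..<j] @ [S j, S (Suc j)] @ map S [Suc (Suc j)..<Suc k]"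
proof -
  have "[1..<Suc k] = [1..<j] @ [j..<Suc k]"
    using assms upt_add_eq_append[of 1 j "Suc k - j"] by simp
  moreover have "[j..<Suc k] = j # Suc j # [Suc (Suc j)..<Suc k]"
    using assms by (simp add: upt_conv_Cons)
  ultimately show ?thesis by (simp add: sigma_run_def)
qed

lemma sigma_run_shift:
  assumes T: "T \<in> {S, X}" and j: "1 \<le> j" "j < k" and k: "k \<le> n - 1"
  shows "peq n (sigma_run k @ [T j]) (T (Suc j) # sigma_run k)"
proof -
  define A where "A = map S [1..<j]"
  define B where "B = map S [Suc (Suc j)..<Suc k]"
  have run: "sigma_run k = A @ [S j, S (Suc j)] @ B"
    unfolding A_def B_def using sigma_run_split[OF j] .
  have "peq n (T j # B) (B @ [T j])"
    using j k by (intro peq_commute_through) (auto simp: B_def intro!: peq_far_commute[OF T])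
  then have "peq n (sigma_run k @ [T j]) (A @ [S j, S (Suc j), T j] @ B)"
    using peq_append[OF peq_sym, of n "T j # B" "B @ [T j]" "A @ [S j, S (Suc j)]" "[]"]
    by (simp add: run)
  also have "peq n \<dots> (A @ [T (Suc j), S j, S (Suc j)] @ B)"
    using j k by (intro peq_append peq_braid_up[OF T]) auto
  also have "peq n \<dots> (T (Suc j) # A @ [S j, S (Suc j)] @ B)"
  proof -
    have "peq n (T (Suc j) # A) (A @ [T (Suc j)])"
      using j k by (intro peq_commute_through) (auto simp: A_def intro!: peq_far_commute[OF T])
    from peq_append[OF peq_sym[OF this], of "[]" "[S j, S (Suc j)] @ B"] show ?thesis
      by simp
  qed
  finally show ?thesis by (simp add: run)
qed

lemma sigma_run_pair_shift_top:
  assumes T: "T \<in> {S, X}"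
  shows "Suc m \<le> n - 1 \<Longrightarrow>
    peq n (sigma_run (Suc m) @ sigma_run m @ [T (Suc m)]) (T 1 # sigma_run (Suc m) @ sigma_run m)"
proof (induction m)
  case 0
  then show ?case
    using peq_same_index_commute[OF T, of 1 n] by (simp add: sigma_run_def)
next
  case (Suc m)
  let ?K = "Suc (Suc m)" and ?P = "sigma_run m"
  have commute: "peq n (S ?K # ?P) (?P @ [S ?K])"
    using Suc.prems
    by (intro peq_commute_through) (auto simp: set_sigma_run intro!: peq_far_commute[of S])
  have "peq n (sigma_run ?K @ sigma_run (Suc m) @ [T ?K])
      (sigma_run (Suc m) @ ?P @ [S ?K, S (Suc m), T ?K])"
    using peq_append[OF commute, of "sigma_run (Suc m)" "[S (Suc m), T ?K]"]
    by (simp add: sigma_run_Suc [of "Suc m"] sigma_run_Suc [of m])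
  also have "peq n \<dots> (sigma_run (Suc m) @ ?P @ [T (Suc m), S ?K, S (Suc m)])"
    using peq_append[OF peq_braid_down[OF T, of "Suc m" n], of "sigma_run (Suc m) @ ?P" "[]"]
      Suc.prems by simp
  also have "peq n \<dots> (T 1 # sigma_run (Suc m) @ ?P @ [S ?K, S (Suc m)])"
    using peq_append[OF Suc.IH, of "[]" "[S ?K, S (Suc m)]"] Suc.prems by simp
  also have "peq n \<dots> (T 1 # sigma_run (Suc m) @ [S ?K] @ ?P @ [S (Suc m)])"
    using peq_append[OF peq_sym[OF commute], of "T 1 # sigma_run (Suc m)" "[S (Suc m)]"] by simp
  finally show ?case
    by (simp add: sigma_run_Suc [of "Suc m"] sigma_run_Suc [of m])
qed

lemma delta_upto_flip:
  assumes T: "T \<in> {S, X}"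
  shows "k \<le> n - 1 \<Longrightarrow> 1 \<le> j \<Longrightarrow> j \<le> k \<Longrightarrow>
    peq n (delta_upto k @ [T j]) (T (Suc k - j) # delta_upto k)"
proof (induction k arbitrary: j)
  case 0
  then show ?case by simp
next
  case (Suc k)
  show ?case
  proof (cases "j \<le> k")
    case True
    have "peq n (delta_upto (Suc k) @ [T j]) (sigma_run (Suc k) @ [T (Suc k - j)] @ delta_upto k)"
      using peq_append[OF Suc.IH, of j "sigma_run (Suc k)" "[]"] Suc.prems True
      by (simp add: delta_upto_Suc)
    also have "peq n \<dots> (T (Suc (Suc k - j)) # delta_upto (Suc k))"
      using peq_append[OF sigma_run_shift[OF T, of "Suc k - j" "Suc k" n], of "[]" "delta_upto k"]
        Suc.prems True by (simp add: delta_upto_Suc)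
    finally show ?thesis
      using True by (simp add: Suc_diff_le)
  next
    case False
    then have j: "j = Suc k" using Suc.prems by simp
    show ?thesis
    proof (cases k)
      case 0
      then show ?thesis
        using peq_same_index_commute[OF T, of 1 n] Suc.prems j
        by (simp add: delta_upto_Suc sigma_run_def)
    next
      case (Suc m)
      have unfold: "delta_upto (Suc k) = sigma_run (Suc k) @ sigma_run k @ delta_upto m"
        by (simp add: delta_upto_Suc Suc)
      have "peq n (T j # delta_upto m) (delta_upto m @ [T j])"
        using Suc.prems j Suc
        by (intro peq_commute_through) (auto simp: set_delta_upto intro!: peq_far_commute[OF T])
      then have "peq n (delta_upto (Suc k) @ [T j])
          (sigma_run (Suc k) @ sigma_run k @ [T (Suc k)] @ delta_upto m)"
        using j peq_append[OF peq_sym, of n "T j # delta_upto m" _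
            "sigma_run (Suc k) @ sigma_run k" "[]"]
        by (simp add: unfold)
      also have "peq n \<dots> (T 1 # delta_upto (Suc k))"
        using peq_append[OF sigma_run_pair_shift_top[OF T, of k n], of "[]" "delta_upto m"] Suc.prems
        by (simp add: unfold)
      finally show ?thesis using j by simp
    qed
  qed
qed

lemma delta_upto_left_divisible:
  "k \<le> n - 1 \<Longrightarrow> 1 \<le> i \<Longrightarrow> i \<le> k \<Longrightarrow>
    \<exists>M. pos_word n M \<and> peq n (delta_upto k) (S i # M)"
proof (induction k arbitrary: i)
  case 0
  then show ?case by simp
next
  case (Suc k)
  show ?case
  proof (cases "i = 1")
    case True
    have "delta_upto (Suc k) = S 1 # tl (delta_upto (Suc k))"
      by (simp add: delta_upto_Suc sigma_run_def upt_conv_Cons del: upt_Suc)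
    moreover have "pos_word n (delta_upto (Suc k))"
      using Suc.prems by (intro pos_word_delta_upto) simp
    ultimately show ?thesis
      using True by (metis peq_refl pos_word_Cons)
  next
    case False
    with Suc.prems obtain j where j: "i = Suc j" "1 \<le> j" "j \<le> k"
      by (cases i) auto
    obtain M where M: "pos_word n M" "peq n (delta_upto k) (S j # M)"
      using Suc.IH[of j] Suc.prems j by auto
    have "peq n (delta_upto (Suc k)) (sigma_run (Suc k) @ [S j] @ M)"
      using peq_append[OF M(2), of "sigma_run (Suc k)" "[]"] by (simp add: delta_upto_Suc)
    also have "peq n \<dots> (S i # sigma_run (Suc k) @ M)"
      using peq_append[OF sigma_run_shift[of S j "Suc k" n], of "[]" M] Suc.prems j
      by simp
    finally have "peq n (delta_upto (Suc k)) (S i # sigma_run (Suc k) @ M)" .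
    moreover have "pos_word n (sigma_run (Suc k) @ M)"
      using M(1) pos_word_sigma_run[of "Suc k" n] Suc.prems by (simp add: pos_word_append)
    ultimately show ?thesis by blast
  qed
qed

lemma delta_flip:
  assumes "T \<in> {S, X}" "1 \<le> j" "j \<le> n - 1"
  shows "peq n (delta n @ [T j]) (T (n - j) # delta n)"
  using delta_upto_flip[OF assms(1), of "n - 1" n j] assms by (simp add: delta_eq_delta_upto)

lemma delta_conj_pos_word:
  "pos_word n P \<Longrightarrow> \<exists>P'. pos_word n P' \<and> peq n (delta n @ P) (P' @ delta n)"
proof (induction P)
  case Nil
  show ?case by (auto intro!: exI[of _ "[]"] peq_refl)
next
  case (Cons a P)
  obtain P' where P': "pos_word n P'" "peq n (delta n @ P) (P' @ delta n)"
    using Cons by (auto simp: pos_word_Cons)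
  obtain T j where a: "T \<in> {S, X}" "a = T j" "1 \<le> j" "j \<le> n - 1"
    using Cons.prems by (cases a) (auto simp: pos_word_Cons)
  have "peq n (delta n @ a # P) ([T (n - j)] @ delta n @ P)"
    using peq_append[OF delta_flip[OF a(1,3,4)], of "[]" P] a(2) by simp
  also have "peq n \<dots> ([T (n - j)] @ (P' @ delta n) @ [])"
    using peq_append[OF P'(2), of "[T (n - j)]" "[]"] by simp
  finally have "peq n (delta n @ a # P) ((T (n - j) # P') @ delta n)"
    by simp
  moreover have "pos_word n (T (n - j) # P')"
    using a P'(1) by (auto simp: pos_word_Cons)
  ultimately show ?case by blast
qed

lemma delta_left_divisible:
  assumes "1 \<le> i" "i \<le> n - 1"
  shows "\<exists>M. pos_word n M \<and> peq n (delta n) (S i # M)"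
  using delta_upto_left_divisible[of "n - 1" n i] assms by (simp add: delta_eq_delta_upto)

lemma inv_word_Nil [simp]: "inv_word [] = []"
  by (simp add: inv_word_def)

lemma inv_word_Cons: "inv_word (a # g) = inv_word g @ [ginv a]"
  by (simp add: inv_word_def)

lemma inv_word_append: "inv_word (a @ b) = inv_word b @ inv_word a"
  by (simp add: inv_word_def)

lemma ginv_ginv [simp]: "ginv (ginv a) = a"
  by (cases a) auto

lemma inv_word_inv_word [simp]: "inv_word (inv_word g) = g"
  by (simp add: inv_word_def rev_map comp_def)

lemma braid_word_Cons:
  "braid_word n (a # w) \<longleftrightarrow> 1 \<le> gidx a \<and> gidx a \<le> n - 1 \<and> is_braid_gen a \<and> braid_word n w"
  by (auto simp: braid_word_def valid_word_def)

lemma braid_word_append: "braid_word n (a @ b) \<longleftrightarrow> braid_word n a \<and> braid_word n b"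
  by (auto simp: braid_word_def valid_word_def)

lemma braid_word_Nil [simp]: "braid_word n []"
  by (simp add: braid_word_def valid_word_def)

lemma braid_word_inv_word: "braid_word n g \<Longrightarrow> braid_word n (inv_word g)"
proof (induction g)
  case (Cons a g)
  then show ?case
    by (cases a) (auto simp: inv_word_Cons braid_word_append braid_word_Cons)
qed simp

lemma braid_word_delta: "braid_word n (delta n)"
  by (auto simp: delta_def braid_word_def valid_word_def)

lemma sbeq_gen_cancel:
  assumes "1 \<le> gidx a" "gidx a \<le> n - 1" "is_braid_gen a"
  shows "sbeq n [a, ginv a] []"
  using assms by (cases a) (auto intro!: sbeq_rel simp: sb_rels_def)

lemma sbeq_braid_word_cancel: "braid_word n g \<Longrightarrow> sbeq n (g @ inv_word g) []"
proof (induction g)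
  case Nil
  then show ?case by (simp add: sbeq_refl)
next
  case (Cons a g)
  have "sbeq n ([a] @ (g @ inv_word g) @ [ginv a]) ([a] @ [] @ [ginv a])"
    using Cons by (intro sbeq_append) (simp add: braid_word_Cons)
  also have "sbeq n \<dots> []"
    using Cons.prems by (simp add: sbeq_gen_cancel braid_word_Cons)
  finally show ?case by (simp add: inv_word_Cons)
qed

lemma sbeq_inv_word_braid_word_cancel: "braid_word n g \<Longrightarrow> sbeq n (inv_word g @ g) []"
  using sbeq_braid_word_cancel[of n "inv_word g"] braid_word_inv_word by simp

lemma pos_word_delta_inv_commute:
  assumes "pos_word n P"
  shows "\<exists>P'. pos_word n P' \<and> sbeq n (P @ inv_word (delta n)) (inv_word (delta n) @ P')"
proof -
  obtain P' where P': "pos_word n P'" "peq n (delta n @ P) (P' @ delta n)"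
    using delta_conj_pos_word[OF assms] by blast
  let ?d = "delta n" and ?d' = "inv_word (delta n)"
  have "sbeq n (P @ ?d') ((?d' @ ?d) @ P @ ?d')"
    using sbeq_append[OF sbeq_sym[OF sbeq_inv_word_braid_word_cancel[OF braid_word_delta]],
        of n "[]" "P @ ?d'"] by simp
  also have "sbeq n \<dots> (?d' @ (P' @ ?d) @ ?d')"
    using sbeq_append[OF peq_imp_sbeq[OF P'(2)], of ?d' ?d'] by simp
  also have "sbeq n \<dots> ((?d' @ P') @ [] @ [])"
    using sbeq_append[OF sbeq_braid_word_cancel[OF braid_word_delta], of n "?d' @ P'" "[]"] by simp
  finally show ?thesis using P'(1) by auto
qed

lemma sbeq_Si_delta_inv:
  assumes "1 \<le> i" "i \<le> n - 1"
  shows "\<exists>M. pos_word n M \<and> sbeq n [Si i] (M @ inv_word (delta n))"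
proof -
  obtain M where M: "pos_word n M" "peq n (delta n) (S i # M)"
    using delta_left_divisible[OF assms] by blast
  let ?d = "delta n" and ?d' = "inv_word (delta n)"
  have "sbeq n [Si i] ([Si i] @ (?d @ ?d') @ [])"
    using sbeq_append[OF sbeq_sym[OF sbeq_braid_word_cancel[OF braid_word_delta]],
        of n "[Si i]" "[]"] by simp
  also have "sbeq n \<dots> ([Si i] @ (S i # M) @ ?d')"
    using sbeq_append[OF peq_imp_sbeq[OF M(2)], of "[Si i]" ?d'] by simp
  also have "sbeq n \<dots> ([] @ [] @ M @ ?d')"
    using sbeq_append[OF sbeq_gen_cancel[of "Si i" n], of "[]" "M @ ?d'"] assms by simp
  finally show ?thesis using M(1) by auto
qed

lemma delta_pow_append_delta: "sbeq n (delta_pow n m @ delta n) (delta_pow n (m + 1))"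
proof (cases "m \<ge> 0")
  case True
  then have "nat (m + 1) = Suc (nat m)" by simp
  with True show ?thesis
    by (simp add: delta_pow_def replicate_append_same [symmetric] sbeq_refl)
next
  case False
  then have "nat (- m) = Suc (nat (- (m + 1)))" by simp
  with False have "delta_pow n m = delta_pow n (m + 1) @ inv_word (delta n)"
    by (simp add: delta_pow_def replicate_append_same [symmetric])
  then show ?thesis
    using sbeq_append[OF sbeq_inv_word_braid_word_cancel[OF braid_word_delta],
        of n "delta_pow n (m + 1)" "[]"] by simp
qed

lemma delta_pow_append_delta_inv:
  "sbeq n (delta_pow n m @ inv_word (delta n)) (delta_pow n (m - 1))"
proof (cases "m \<ge> 1")
  case True
  then have "nat m = Suc (nat (m - 1))" by simp
  with True have "delta_pow n m = delta_pow n (m - 1) @ delta n"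
    by (simp add: delta_pow_def replicate_append_same [symmetric])
  then show ?thesis
    using sbeq_append[OF sbeq_braid_word_cancel[OF braid_word_delta],
        of n "delta_pow n (m - 1)" "[]"] by simp
next
  case False
  then have "nat (- (m - 1)) = Suc (nat (- m))" by simp
  with False show ?thesis
    by (simp add: delta_pow_def replicate_append_same [symmetric] sbeq_refl)
qed

lemma exists_delta_pow_factorization:
  "valid_word n u \<Longrightarrow> \<exists>m A. pos_word n A \<and> sbeq n u (delta_pow n m @ A)"
proof (induction u rule: rev_induct)
  case Nil
  have "delta_pow n 0 = []" by (simp add: delta_pow_def)
  then show ?case by (auto intro!: exI[of _ 0] exI[of _ "[]"] sbeq_refl)
next
  case (snoc a u)
  then have a: "1 \<le> gidx a" "gidx a \<le> n - 1" and "valid_word n u"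
    by (auto simp: valid_word_def)
  then obtain m A where A: "pos_word n A" "sbeq n u (delta_pow n m @ A)"
    using snoc.IH by blast
  have ua: "sbeq n (u @ [a]) (delta_pow n m @ A @ [a])"
    using sbeq_append[OF A(2), of "[]" "[a]"] by simp
  show ?case
  proof (cases "is_pos_gen a")
    case True
    then have "pos_word n (A @ [a])"
      using A(1) a by (simp add: pos_word_append pos_word_Cons)
    with ua show ?thesis by auto
  next
    case False
    then obtain i where "a = Si i" by (cases a) auto
    obtain M where M: "pos_word n M" "sbeq n [Si i] (M @ inv_word (delta n))"
      using sbeq_Si_delta_inv[of i n] a \<open>a = Si i\<close> by auto
    obtain A' where A': "pos_word n A'"
      "sbeq n ((A @ M) @ inv_word (delta n)) (inv_word (delta n) @ A')"
      using pos_word_delta_inv_commute[of n "A @ M"] A(1) M(1) by (auto simp: pos_word_append)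
    note ua
    also have "sbeq n (delta_pow n m @ A @ [a]) (delta_pow n m @ ((A @ M) @ inv_word (delta n)) @ [])"
      using sbeq_append[OF M(2), of "delta_pow n m @ A" "[]"] \<open>a = Si i\<close> by simp
    also have "sbeq n \<dots> ([] @ (delta_pow n m @ inv_word (delta n)) @ A')"
      using sbeq_append[OF A'(2), of "delta_pow n m" "[]"] by simp
    also have "sbeq n \<dots> ([] @ delta_pow n (m - 1) @ A')"
      by (rule sbeq_append, rule delta_pow_append_delta_inv)
    finally show ?thesis using A'(1) by auto
  qed
qed

fun gen_exponent :: "gen \<Rightarrow> int" where
  "gen_exponent (S _) = 1" | "gen_exponent (Si _) = -1" | "gen_exponent (X _) = 0"

definition exp_sum :: "gen list \<Rightarrow> int" where
  "exp_sum w = (\<Sum>a\<leftarrow>w. gen_exponent a)"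

lemma exp_sum_Nil [simp]: "exp_sum [] = 0"
  by (simp add: exp_sum_def)

lemma exp_sum_Cons [simp]: "exp_sum (a # w) = gen_exponent a + exp_sum w"
  by (simp add: exp_sum_def)

lemma exp_sum_append [simp]: "exp_sum (a @ b) = exp_sum a + exp_sum b"
  by (simp add: exp_sum_def)

lemma sbeq_exp_sum: "sbeq n a b \<Longrightarrow> exp_sum a = exp_sum b"
  unfolding sbeq_def
  by (rule rtrancl_rew_step_invariant[where f = exp_sum]) (auto simp: sb_rels_def pos_rels_def)

lemma peq_length: "peq n a b \<Longrightarrow> length a = length b"
  unfolding peq_def
  by (rule rtrancl_rew_step_invariant[where f = length]) (auto simp: pos_rels_def)

lemma exp_sum_inv_word: "exp_sum (inv_word g) = - exp_sum g"
proof (induction g)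
  case (Cons a g)
  then show ?case by (cases a) (auto simp: inv_word_Cons)
qed simp

lemma exp_sum_delta_pow: "exp_sum (delta_pow n m) = m * exp_sum (delta n)"
proof -
  have "exp_sum (concat (replicate k w)) = int k * exp_sum w" for k w
    by (induction k) (auto simp: algebra_simps)
  then show ?thesis by (simp add: delta_pow_def exp_sum_inv_word)
qed

lemma exp_sum_pos_word_nonneg: "pos_word n A \<Longrightarrow> 0 \<le> exp_sum A"
proof (induction A)
  case (Cons a A)
  then show ?case by (cases a) (auto simp: pos_word_Cons)
qed simp

lemma exp_sum_sigma_run: "exp_sum (sigma_run k) = int k"
  by (induction k) (simp_all add: sigma_run_Suc)

lemma exp_sum_delta_pos:
  assumes "2 \<le> n"
  shows "1 \<le> exp_sum (delta n)"
proof -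
  have "delta n = sigma_run (n - 1) @ delta_upto (n - 2)"
    using assms delta_upto_Suc[of "n - 2"] by (simp add: delta_eq_delta_upto Suc_diff_Suc numeral_2_eq_2)
  moreover have "0 \<le> exp_sum (delta_upto (n - 2))"
    by (rule exp_sum_pos_word_nonneg[OF pos_word_delta_upto[of _ n]]) simp
  ultimately show ?thesis
    using assms by (simp add: exp_sum_sigma_run)
qed

lemma delta_pow_le_exp_sum:
  assumes "2 \<le> n" "pos_word n A" "sbeq n W (delta_pow n m @ A)"
  shows "m \<le> \<bar>exp_sum W\<bar>"
proof -
  have W: "exp_sum W = m * exp_sum (delta n) + exp_sum A"
    using sbeq_exp_sum[OF assms(3)] by (simp add: exp_sum_delta_pow)
  have "m \<le> m * exp_sum (delta n)" if "0 < m"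
    using that exp_sum_delta_pos[OF assms(1)] by simp
  then show ?thesis
    using W exp_sum_pos_word_nonneg[OF assms(2)] by (cases "0 < m") linarith+
qed

lemma ex_greatest_int_bounded:
  fixes P :: "int \<Rightarrow> bool"
  assumes "P x" and "\<And>y. P y \<Longrightarrow> y \<le> b"
  shows "\<exists>z. P z \<and> (\<forall>y. P y \<longrightarrow> y \<le> z)"
proof -
  define z where "z = arg_min (\<lambda>y. nat (b - y)) P"
  have "P z" and "\<And>y. P y \<Longrightarrow> nat (b - z) \<le> nat (b - y)"
    using arg_min_nat_lemma[of P x "\<lambda>y. nat (b - y)"] assms(1) by (simp_all add: z_def)
  moreover have "y \<le> z" if "P y" for y
    using \<open>P z\<close> that assms(2)[of y] assms(2)[of z] nat_le_eq_zle[of "b - z" "b - y"]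
      \<open>\<And>y. P y \<Longrightarrow> nat (b - z) \<le> nat (b - y)\<close>[OF that] by linarith
  ultimately show ?thesis by blast
qed

lemma inj_on_gkey_pos_gens: "inj_on (gkey n) {a. is_pos_gen a \<and> gidx a < n}"
proof (rule inj_onI)
  fix a b
  assume "a \<in> {a. is_pos_gen a \<and> gidx a < n}" "b \<in> {a. is_pos_gen a \<and> gidx a < n}"
    and "gkey n a = gkey n b"
  then show "a = b" by (cases a; cases b) auto
qed

text \<open>Within a class of positively equal words (which all have the same length) the
  lexicographic order agrees with the well-founded length-lexicographic order.\<close>

lemma exists_lex_least_peq:
  assumes "pos_word n A"
  shows "\<exists>B. pos_word n B \<and> peq n B A \<and> (\<forall>B'. pos_word n B' \<and> peq n B' B \<longrightarrow> lex_le n B B')"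
proof -
  define M where "M = {B. pos_word n B \<and> peq n B A}"
  define R where "R = inv_image (lenlex {(p, q :: nat). p < q}) (map (gkey n))"
  have "wf R"
    unfolding R_def by (intro wf_inv_image wf_lenlex wf_less)
  moreover have "A \<in> M"
    using assms by (simp add: M_def peq_refl)
  ultimately obtain B where "B \<in> M" and B_min: "\<And>B'. (B', B) \<in> R \<Longrightarrow> B' \<notin> M"
    using wfE_min by metis
  have "lex_le n B B'" if B': "pos_word n B'" "peq n B' B" for B'
  proof -
    have "B' \<in> M"
      using \<open>B \<in> M\<close> B' by (auto simp: M_def intro: peq_trans)
    then have "(map (gkey n) B', map (gkey n) B) \<notin> lexord {(p, q). p < q}"
      using B_min peq_length[OF B'(2)] by (auto simp: R_def lenlex_conv lexord_lex)
    moreover have "inj_on (gkey n) (set B \<union> set B')"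
      using \<open>B \<in> M\<close> B'(1) by (intro inj_on_subset[OF inj_on_gkey_pos_gens])
        (auto simp: M_def pos_word_def valid_word_def)
    then have "map (gkey n) B = map (gkey n) B' \<Longrightarrow> B = B'"
      using map_inj_on by blast
    moreover have "(map (gkey n) B, map (gkey n) B') \<in> lexord {(p, q). p < q}
        \<or> map (gkey n) B = map (gkey n) B' \<or> (map (gkey n) B', map (gkey n) B) \<in> lexord {(p, q). p < q}"
      by (rule lexord_linear) auto
    ultimately show ?thesis
      by (auto simp: lex_le_def)
  qed
  with \<open>B \<in> M\<close> show ?thesis by (auto simp: M_def)
qed

lemma exists_garside_nf:
  assumes "2 \<le> n" "valid_word n u"
  shows "\<exists>m A. is_garside_nf n u m A"
proof -
  define P where "P m \<longleftrightarrow> (\<exists>A. pos_word n A \<and> sbeq n u (delta_pow n m @ A))" for m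
  obtain m0 where "P m0"
    using exists_delta_pow_factorization[OF assms(2)] by (auto simp: P_def)
  moreover have "P m \<Longrightarrow> m \<le> \<bar>exp_sum u\<bar>" for m
    using delta_pow_le_exp_sum[OF assms(1)] by (auto simp: P_def)
  ultimately obtain m where "P m" and m_max: "\<And>m'. P m' \<Longrightarrow> m' \<le> m"
    using ex_greatest_int_bounded by metis
  then obtain A where A: "pos_word n A" "sbeq n u (delta_pow n m @ A)"
    by (auto simp: P_def)
  obtain B where B: "pos_word n B" "peq n B A"
    and B_least: "\<forall>B'. pos_word n B' \<and> peq n B' B \<longrightarrow> lex_le n B B'"
    using exists_lex_least_peq[OF A(1)] by blast
  have uB: "sbeq n u (delta_pow n m @ B)"
    using A(2) sbeq_append[OF peq_imp_sbeq[OF peq_sym[OF B(2)]], of "delta_pow n m" "[]"]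
    by (auto intro: sbeq_trans)
  have "\<not> (\<exists>Z. pos_word n Z \<and> peq n B (delta n @ Z))"
  proof
    assume "\<exists>Z. pos_word n Z \<and> peq n B (delta n @ Z)"
    then obtain Z where Z: "pos_word n Z" "peq n B (delta n @ Z)" by blast
    note uB
    also have "sbeq n (delta_pow n m @ B) ((delta_pow n m @ delta n) @ Z @ [])"
      using sbeq_append[OF peq_imp_sbeq[OF Z(2)], of "delta_pow n m" "[]"] by simp
    also have "sbeq n \<dots> ([] @ delta_pow n (m + 1) @ Z)"
      using sbeq_append[OF delta_pow_append_delta[of n m], of "[]" Z] by simp
    finally have "P (m + 1)"
      using Z(1) by (auto simp: P_def)
    then show False
      using m_max by fastforce
  qed
  with B(1) uB B_least show ?thesis
    unfolding is_garside_nf_def by blast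
qed

lemma sb_conj_refl: "sb_conj n u u"
  unfolding sb_conj_def by (auto intro!: exI[of _ "[]"] sbeq_refl)

lemma sb_conj_sym:
  assumes "sb_conj n u v"
  shows "sb_conj n v u"
proof -
  obtain g where g: "braid_word n g" "sbeq n v (inv_word g @ u @ g)"
    using assms unfolding sb_conj_def by blast
  have "sbeq n (g @ v @ inv_word g) ((g @ inv_word g) @ u @ (g @ inv_word g))"
    using sbeq_append[OF g(2), of g "inv_word g"] by simp
  also have "sbeq n \<dots> ([] @ u @ (g @ inv_word g))"
    using sbeq_append[OF sbeq_braid_word_cancel[OF g(1)], of "[]" "u @ g @ inv_word g"] by simp
  also have "sbeq n \<dots> ((u @ []) @ [] @ [])"
    using sbeq_append[OF sbeq_braid_word_cancel[OF g(1)], of u "[]"] by simp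
  finally have "sbeq n u (inv_word (inv_word g) @ v @ inv_word g)"
    by (simp add: sbeq_sym)
  then show ?thesis
    unfolding sb_conj_def using braid_word_inv_word[OF g(1)] by blast
qed

lemma sb_conj_trans:
  assumes "sb_conj n u v" "sb_conj n v w"
  shows "sb_conj n u w"
proof -
  obtain g h where g: "braid_word n g" "sbeq n v (inv_word g @ u @ g)"
    and h: "braid_word n h" "sbeq n w (inv_word h @ v @ h)"
    using assms unfolding sb_conj_def by blast
  have "sbeq n w (inv_word (g @ h) @ u @ (g @ h))"
    using sbeq_trans[OF h(2) sbeq_append[OF g(2)]] by (simp add: inv_word_append)
  moreover have "braid_word n (g @ h)"
    using g h by (simp add: braid_word_append)
  ultimately show ?thesis
    unfolding sb_conj_def by blast
qed

lemma sb_conj_sbeq: "sb_conj n u v \<Longrightarrow> sbeq n v w \<Longrightarrow> sb_conj n u w"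
  unfolding sb_conj_def by (meson sbeq_sym sbeq_trans)

lemma sb_conj_exp_sum: "sb_conj n u v \<Longrightarrow> exp_sum u = exp_sum v"
  unfolding sb_conj_def by (auto dest!: sbeq_exp_sum simp: exp_sum_inv_word)

lemma summit_set_eq_if_conj:
  assumes "sb_conj n u v"
  shows "summit_set n u = summit_set n v"
proof -
  have "sb_conj n u = sb_conj n v"
    using assms sb_conj_sym sb_conj_trans by blast
  then show ?thesis
    unfolding summit_set_def summit_power_def by simp
qed

lemma summit_set_nonempty:
  assumes "2 \<le> n" "valid_word n u"
  shows "summit_set n u \<noteq> {}"
proof -
  define P where "P m \<longleftrightarrow> (\<exists>W A. valid_word n W \<and> sb_conj n u W \<and> is_garside_nf n W m A)" for m
  obtain m0 A0 where "is_garside_nf n u m0 A0"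
    using exists_garside_nf[OF assms] by blast
  then have "P m0"
    using assms(2) sb_conj_refl unfolding P_def by blast
  moreover have "m \<le> \<bar>exp_sum u\<bar>" if "P m" for m
  proof -
    obtain W A where "sb_conj n u W" "is_garside_nf n W m A"
      using \<open>P m\<close> unfolding P_def by blast
    then show ?thesis
      using delta_pow_le_exp_sum[OF assms(1)] sb_conj_exp_sum
      unfolding is_garside_nf_def by metis
  qed
  ultimately obtain p where "P p" and p_max: "\<And>m. P m \<Longrightarrow> m \<le> p"
    using ex_greatest_int_bounded by metis
  then have "summit_power n u = p"
    unfolding summit_power_def P_def [symmetric] by (blast intro: Greatest_equality)
  with \<open>P p\<close> show ?thesis
    unfolding summit_set_def P_def by blast
qed

lemma sbeq_if_same_garside_nf:
  "is_garside_nf n W m A \<Longrightarrow> is_garside_nf n W' m A \<Longrightarrow> sbeq n W W'"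
  unfolding is_garside_nf_def by (meson sbeq_sym sbeq_trans)

lemma sb_conj_if_summit_sets_meet:
  assumes "x \<in> summit_set n u" "x \<in> summit_set n v"
  shows "sb_conj n u v"
proof -
  obtain W W' m A where "x = (m, A)"
    and W: "sb_conj n u W" "is_garside_nf n W m A"
    and W': "sb_conj n v W'" "is_garside_nf n W' m A"
    using assms unfolding summit_set_def by auto
  have "sb_conj n u W'"
    using sb_conj_sbeq[OF W(1) sbeq_if_same_garside_nf[OF W(2) W'(2)]] .
  then show ?thesis
    using sb_conj_trans sb_conj_sym W'(1) by blast
qed

theorem theorem3p2:
  fixes n :: nat and u v :: "gen list"
  assumes "n \<ge> 2" and "valid_word n u" and "valid_word n v"
  shows "sb_conj n u v \<longleftrightarrow> summit_set n u = summit_set n v"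
proof
  show "sb_conj n u v \<Longrightarrow> summit_set n u = summit_set n v"
    by (rule summit_set_eq_if_conj)
next
  assume "summit_set n u = summit_set n v"
  moreover obtain x where "x \<in> summit_set n u"
    using summit_set_nonempty[OF assms(1,2)] by blast
  ultimately show "sb_conj n u v"
    by (metis sb_conj_if_summit_sets_meet)
qed

end
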